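(* For the class $\mathcal{A}=\{A_\rho:\rho\in[0,1]\}$ of MWIS greedy heuristics (adaptive or non-adaptive), there is a distribution over sequences $x_1,\dots,x_T$ of MWIS instances on at most $n$ vertices such that every (possibly randomized) online learning algorithm has expected regret at least $1-o_n(1)$, where $o_n(1)$ is independent of $T$ and tends to $0$ as $n\to\infty$.
   Context: MWIS instance: undirected graph with nonnegative vertex weights. $A_\rho$ repeatedly selects, among vertices not yet selected or blocked, one maximizing $w_v/(1+\deg(v))^\rho$ (ties lexicographic), adds it, and blocks its neighbors; $\deg(v)$ is the original degree (non-adaptive) or the degree in the remaining induced subgraph (adaptive). $\mathrm{cost}(A_\rho,x)\in[0,1]$ is the total weight of the returned independent set (to be maximized). Online learning: at each step $t$ the learner chooses $A_t\in\mathcal{A}$ (possibly randomly) knowing only $x_1,\dots,x_{t-1}$; its regret on $x_1,\dots,x_T$ is $\frac1T\big(\sup_{A\in\mathcal{A}}\sum_{t=1}^T\mathrm{cost}(A,x_t)-\sum_{t=1}^T\mathrm{cost}(A_t,x_t)\big)$. *)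

theory Defs
  imports "HOL-Probability.Probability"
begin

record mwis =
  nv  :: nat
  adj :: "nat \<Rightarrow> nat \<Rightarrow> bool"
  wt  :: "nat \<Rightarrow> real"

definition indep_set :: "mwis \<Rightarrow> nat set \<Rightarrow> bool" where
  "indep_set x S \<longleftrightarrow> S \<subseteq> {0..<nv x} \<and> (\<forall>u\<in>S. \<forall>v\<in>S. \<not> adj x u v)"

text \<open>Valid instance: simple undirected graph, nonnegative weights, and the weight of
  every independent set lies in [0,1] (so that every cost lies in [0,1]).\<close>
definition valid_mwis :: "mwis \<Rightarrow> bool" where
  "valid_mwis x \<longleftrightarrow>
     (\<forall>u v. adj x u v \<longrightarrow> u < nv x \<and> v < nv x) \<and>
     (\<forall>u v. adj x u v \<longleftrightarrow> adj x v u) \<and>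
     (\<forall>v. \<not> adj x v v) \<and>
     (\<forall>v<nv x. wt x v \<ge> 0) \<and>
     (\<forall>S. indep_set x S \<longrightarrow> sum (wt x) S \<le> 1)"

definition gdeg :: "bool \<Rightarrow> mwis \<Rightarrow> nat set \<Rightarrow> nat \<Rightarrow> nat" where
  "gdeg ad x R v = (if ad then card {u\<in>R. adj x v u} else card {u\<in>{0..<nv x}. adj x v u})"

definition gscore :: "bool \<Rightarrow> real \<Rightarrow> mwis \<Rightarrow> nat set \<Rightarrow> nat \<Rightarrow> real" where
  "gscore ad \<rho> x R v = wt x v / (1 + real (gdeg ad x R v)) powr \<rho>"

definition gpick :: "bool \<Rightarrow> real \<Rightarrow> mwis \<Rightarrow> nat set \<Rightarrow> nat" where
  "gpick ad \<rho> x R = (LEAST v. v \<in> R \<and> (\<forall>u\<in>R. gscore ad \<rho> x R u \<le> gscore ad \<rho> x R v))"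

text \<open>Greedy run with a fuel argument (fuel nv suffices: each step removes a vertex).\<close>
fun greedy_run :: "bool \<Rightarrow> real \<Rightarrow> mwis \<Rightarrow> nat \<Rightarrow> nat set \<Rightarrow> nat set" where
  "greedy_run ad \<rho> x 0 R = {}"
| "greedy_run ad \<rho> x (Suc k) R =
     (if R = {} then {}
      else (let v = gpick ad \<rho> x R
            in insert v (greedy_run ad \<rho> x k (R - {v} - {u. adj x v u}))))"

definition greedy :: "bool \<Rightarrow> real \<Rightarrow> mwis \<Rightarrow> nat set" where
  "greedy ad \<rho> x = greedy_run ad \<rho> x (nv x) {0..<nv x}"

definition cost :: "bool \<Rightarrow> real \<Rightarrow> mwis \<Rightarrow> real" where
  "cost ad \<rho> x = sum (wt x) (greedy ad \<rho> x)"

definition valid_learner :: "(mwis list \<Rightarrow> real measure) \<Rightarrow> bool" where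
  "valid_learner L \<longleftrightarrow>
     (\<forall>h. prob_space (L h) \<and> sets (L h) = sets borel \<and> emeasure (L h) {0..1} = 1)"

definition regret :: "bool \<Rightarrow> nat \<Rightarrow> (mwis list \<Rightarrow> real measure) \<Rightarrow> mwis list \<Rightarrow> real" where
  "regret ad T L xs =
     (1 / real T) * ((SUP \<rho>\<in>{0..1}. \<Sum>t<T. cost ad \<rho> (xs ! t))
        - (\<Sum>t<T. \<integral>\<rho>. cost ad \<rho> (xs ! t) \<partial>(L (take t xs))))"

definition expected_regret :: "bool \<Rightarrow> nat \<Rightarrow> mwis list pmf \<Rightarrow> (mwis list \<Rightarrow> real measure) \<Rightarrow> real" where
  "expected_regret ad T D L = measure_pmf.expectation D (regret ad T L)"

end

theory Submission
  imports Defs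
begin

text \<open>For m \<ge> 3 and an interval (a, b) \<subseteq> [0, 1] there is a gadget on 2m + 2 vertices on
  which the greedy heuristic with parameter \<rho> collects total weight 1 if a < \<rho> < b and at
  most 3/m otherwise: its first pick is either a vertex of weight 1/m from a block of m such
  vertices, or one of two hub vertices, depending on how \<rho> compares with a and b. The adversary plays T rounds; each round splits the
  current interval into m equal open pieces and plays the gadget of a uniformly random piece,
  which becomes the current interval. Some \<rho> lies in all chosen pieces and gains T, while the
  learner's round-t distribution, fixed before the piece is drawn, puts on average mass at most
  1/m on it. Hence the expected regret is at least 1 - 4/m.\<close>

lemma gpick_maximal:
  assumes "finite R" "R \<noteq> {}"
  shows "gpick ad \<rho> x R \<in> R \<and> (\<forall>u\<in>R. gscore ad \<rho> x R u \<le> gscore ad \<rho> x R (gpick ad \<rho> x R))"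
proof -
  let ?f = "gscore ad \<rho> x R"
  have "Max (?f ` R) \<in> ?f ` R" using assms by (intro Max_in) auto
  then obtain v where v: "v \<in> R" "?f v = Max (?f ` R)" by (metis imageE)
  have "\<forall>u\<in>R. ?f u \<le> ?f v" using v assms by auto
  then show ?thesis unfolding gpick_def
    using LeastI[of "\<lambda>w. w \<in> R \<and> (\<forall>u\<in>R. ?f u \<le> ?f w)" v] v by blast
qed

lemma gpick_le:
  assumes "v \<in> R" "\<forall>u\<in>R. gscore ad \<rho> x R u \<le> gscore ad \<rho> x R v"
  shows "gpick ad \<rho> x R \<le> v"
  unfolding gpick_def by (rule Least_le) (use assms in auto)

lemma greedy_run_subset: "finite R \<Longrightarrow> greedy_run ad \<rho> x k R \<subseteq> R"
proof (induction k arbitrary: R)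
  case (Suc k)
  show ?case
  proof (cases "R = {}")
    case False
    let ?v = "gpick ad \<rho> x R"
    have "?v \<in> R" using gpick_maximal[OF Suc.prems False] by blast
    moreover have "greedy_run ad \<rho> x k (R - {?v} - {u. adj x ?v u}) \<subseteq> R - {?v} - {u. adj x ?v u}"
      using Suc by auto
    ultimately show ?thesis by (auto simp: Let_def)
  qed simp
qed simp

lemma greedy_run_independent:
  assumes sym: "\<And>u v. adj x u v \<longleftrightarrow> adj x v u" and irrefl: "\<And>v. \<not> adj x v v"
  shows "finite R \<Longrightarrow> \<forall>u\<in>greedy_run ad \<rho> x k R. \<forall>w\<in>greedy_run ad \<rho> x k R. \<not> adj x u w"
proof (induction k arbitrary: R)
  case (Suc k)
  show ?case
  proof (cases "R = {}")
    case False
    let ?v = "gpick ad \<rho> x R"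
    let ?R' = "R - {?v} - {u. adj x ?v u}"
    let ?S' = "greedy_run ad \<rho> x k ?R'"
    have sub: "?S' \<subseteq> ?R'"
      using Suc.prems by (intro greedy_run_subset) simp
    have nonadj: "\<not> adj x ?v u \<and> \<not> adj x u ?v" if "u \<in> ?S'" for u
    proof -
      have "u \<in> ?R'" using sub that by blast
      then show ?thesis by (simp add: sym[of u ?v])
    qed
    have indep: "\<forall>u\<in>?S'. \<forall>w\<in>?S'. \<not> adj x u w"
      using Suc.prems by (intro Suc.IH) simp
    have "greedy_run ad \<rho> x (Suc k) R = insert ?v ?S'"
      using False by (simp add: Let_def)
    then show ?thesis
      using irrefl[of ?v] nonadj indep by (metis insertE)
  qed simp
qed simp

lemma cost_le_1:
  assumes "valid_mwis x"
  shows "cost ad \<rho> x \<le> 1"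
proof -
  have "greedy ad \<rho> x \<subseteq> {0..<nv x}"
    unfolding greedy_def by (intro greedy_run_subset) simp
  moreover have "\<forall>u\<in>greedy ad \<rho> x. \<forall>w\<in>greedy ad \<rho> x. \<not> adj x u w"
    unfolding greedy_def using assms by (intro greedy_run_independent) (auto simp: valid_mwis_def)
  ultimately have "indep_set x (greedy ad \<rho> x)" by (simp add: indep_set_def)
  then show ?thesis using assms by (simp add: valid_mwis_def cost_def)
qed

lemma greedy_run_of_independent:
  "finite R \<Longrightarrow> \<forall>u\<in>R. \<forall>v\<in>R. \<not> adj x u v \<Longrightarrow> card R \<le> k \<Longrightarrow> greedy_run ad \<rho> x k R = R"
proof (induction k arbitrary: R)
  case (Suc k)
  show ?case
  proof (cases "R = {}")
    case False
    let ?v = "gpick ad \<rho> x R"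
    have v: "?v \<in> R" using gpick_maximal[OF Suc.prems(1) False] by blast
    have "R - {?v} - {u. adj x ?v u} = R - {?v}" using Suc.prems(2) v by auto
    moreover have "greedy_run ad \<rho> x k (R - {?v}) = R - {?v}"
      using Suc v False by (intro Suc.IH) (auto simp: card_Diff_singleton)
    ultimately show ?thesis using False v by (auto simp: Let_def)
  qed simp
qed simp

lemma greedy_first_step:
  assumes "nv x = Suc k"
  shows "greedy ad \<rho> x = insert (gpick ad \<rho> x {0..<nv x})
           (greedy_run ad \<rho> x k ({0..<nv x} - {gpick ad \<rho> x {0..<nv x}} - {u. adj x (gpick ad \<rho> x {0..<nv x}) u}))"
  using assms by (simp add: greedy_def Let_def)

definition gadget_good :: "nat \<Rightarrow> nat \<Rightarrow> bool" where
  "gadget_good m u \<longleftrightarrow> 2 \<le> u \<and> u < m + 2"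

definition gadget_null :: "nat \<Rightarrow> nat \<Rightarrow> bool" where
  "gadget_null m u \<longleftrightarrow> m + 2 \<le> u \<and> u < 2*m + 2"

text \<open>Vertex 0 is adjacent to all good and null vertices (degree 2m), vertex 1 to all good
  vertices (degree m), and a good vertex to 0, 1 and the null vertices (degree m + 2).\<close>
definition gadget_adj :: "nat \<Rightarrow> nat \<Rightarrow> nat \<Rightarrow> bool" where
  "gadget_adj m u v \<longleftrightarrow>
     (gadget_good m u \<and> (v < 2 \<or> gadget_null m v)) \<or> ((u < 2 \<or> gadget_null m u) \<and> gadget_good m v)
     \<or> (u = 0 \<and> gadget_null m v) \<or> (gadget_null m u \<and> v = 0)"

text \<open>The weights of vertices 0 and 1 make their scores equal to that of a good vertex times
  ((2m+1)/(m+3)) powr (a - \<rho>) and ((m+1)/(m+3)) powr (b - \<rho>) respectively.\<close>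
definition gadget_wt :: "nat \<Rightarrow> real \<Rightarrow> real \<Rightarrow> nat \<Rightarrow> real" where
  "gadget_wt m a b v =
     (if v = 0 then (1/m) * ((2*m+1)/(m+3)) powr a
      else if v = 1 then (1/m) * ((m+1)/(m+3)) powr b
      else if gadget_good m v then 1/m else 0)"

definition gadget :: "nat \<Rightarrow> real \<Rightarrow> real \<Rightarrow> mwis" where
  "gadget m a b = \<lparr>nv = 2*m+2, adj = gadget_adj m, wt = gadget_wt m a b\<rparr>"

lemmas gadget_simps = gadget_adj_def gadget_good_def gadget_null_def

lemma wt_gadget: "wt (gadget m a b) = gadget_wt m a b"
  by (simp add: gadget_def)

lemma gadget_adj_sym: "gadget_adj m u v \<longleftrightarrow> gadget_adj m v u"
  by (auto simp: gadget_adj_def)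

lemma gadget_adj_irrefl: "\<not> gadget_adj m v v"
  by (auto simp: gadget_simps)

lemma gadget_adj_less: "gadget_adj m u v \<Longrightarrow> u < 2*m+2"
  unfolding gadget_simps by linarith

lemma gadget_vertex_cases: "v < 2*m+2 \<Longrightarrow> v = 0 \<or> v = 1 \<or> gadget_good m v \<or> gadget_null m v"
  by (auto simp: gadget_good_def gadget_null_def)

lemma gadget_wt_nonneg: "gadget_wt m a b v \<ge> 0"
  by (simp add: gadget_wt_def)

lemma sum_gadget_wt_good: "m > 0 \<Longrightarrow> sum (gadget_wt m a b) {2..<m+2} = 1"
  by (simp add: gadget_wt_def gadget_good_def)

lemma sum_gadget_wt_not_good:
  "m > 0 \<Longrightarrow> sum (gadget_wt m a b) ({0,1} \<union> {m+2..<2*m+2}) = gadget_wt m a b 0 + gadget_wt m a b 1"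
proof -
  assume "m > 0"
  then have "sum (gadget_wt m a b) ({0,1} \<union> {m+2..<2*m+2})
      = gadget_wt m a b 0 + gadget_wt m a b 1 + sum (gadget_wt m a b) {m+2..<2*m+2}"
    by (subst sum.union_disjoint) auto
  moreover have "sum (gadget_wt m a b) {m+2..<2*m+2} = 0"
    by (intro sum.neutral) (auto simp: gadget_wt_def gadget_good_def)
  ultimately show ?thesis by simp
qed

lemma gadget_wt_hubs_le:
  assumes m: "m \<ge> 3" and "a \<le> 1" "0 \<le> b"
  shows "gadget_wt m a b 0 + gadget_wt m a b 1 \<le> 3/m"
proof -
  have base: "(2*real m+1)/(m+3) > 1" using m by (simp add: field_simps)
  have "((2*real m+1)/(m+3)) powr a \<le> ((2*real m+1)/(m+3)) powr 1"
    using powr_le_cancel_iff[OF base, of a 1] assms by linarith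
  also have "\<dots> \<le> 2" using m by (simp add: field_simps)
  finally have "gadget_wt m a b 0 \<le> 2/m" using m by (simp add: gadget_wt_def field_simps)
  moreover have "((real m+1)/(m+3)) powr b \<le> ((real m+1)/(m+3)) powr 0"
    using assms by (intro powr_mono') (auto simp: field_simps)
  then have "gadget_wt m a b 1 \<le> 1/m" using m by (simp add: gadget_wt_def field_simps)
  ultimately show ?thesis by (simp add: add_divide_distrib[symmetric])
qed

lemma sum_gadget_wt_independent:
  assumes m: "m \<ge> 3" and "a \<le> 1" "0 \<le> b"
    and S: "S \<subseteq> {0..<2*m+2}" and indep: "\<forall>u\<in>S. \<forall>v\<in>S. \<not> gadget_adj m u v"
  shows "sum (gadget_wt m a b) S \<le> 1"
proof (cases "\<exists>u\<in>S. gadget_good m u")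
  case True
  then obtain u where u: "u \<in> S" "gadget_good m u" by blast
  have "S \<subseteq> {2..<m+2}"
  proof
    fix v assume v: "v \<in> S"
    then have "\<not> gadget_adj m u v" using indep u by blast
    then show "v \<in> {2..<m+2}" using S v u(2) by (auto simp: gadget_simps)
  qed
  then have "sum (gadget_wt m a b) S \<le> sum (gadget_wt m a b) {2..<m+2}"
    by (intro sum_mono2) (auto simp: gadget_wt_nonneg)
  then show ?thesis using m sum_gadget_wt_good[of m a b] by simp
next
  case False
  have "S \<subseteq> {0,1} \<union> {m+2..<2*m+2}"
  proof
    fix v assume "v \<in> S"
    then have "v < 2*m+2" "\<not> (2 \<le> v \<and> v < m+2)" using S False by (auto simp: gadget_good_def)
    then show "v \<in> {0,1} \<union> {m+2..<2*m+2}" by auto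
  qed
  then have "sum (gadget_wt m a b) S \<le> sum (gadget_wt m a b) ({0,1} \<union> {m+2..<2*m+2})"
    by (intro sum_mono2) (auto simp: gadget_wt_nonneg)
  also have "\<dots> \<le> 3/m"
    using m sum_gadget_wt_not_good[of m a b] gadget_wt_hubs_le[OF assms(1-3)] by simp
  also have "\<dots> \<le> 1" using m by simp
  finally show ?thesis .
qed

lemma gadget_valid:
  assumes "m \<ge> 3" "a \<le> 1" "0 \<le> b"
  shows "valid_mwis (gadget m a b)"
  unfolding valid_mwis_def
proof (intro conjI allI impI)
  fix S assume "indep_set (gadget m a b) S"
  then show "sum (wt (gadget m a b)) S \<le> 1"
    using sum_gadget_wt_independent[OF assms] by (simp add: indep_set_def gadget_def wt_gadget)
next
  fix u v assume "adj (gadget m a b) u v"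
  then show "u < nv (gadget m a b)" "v < nv (gadget m a b)"
    using gadget_adj_less[of m u v] gadget_adj_less[of m v u] gadget_adj_sym[of m u v]
    by (simp_all add: gadget_def)
qed (simp_all add: gadget_def gadget_adj_irrefl gadget_wt_nonneg gadget_adj_sym)

text \<open>On the full vertex set the adaptive and non-adaptive degrees coincide.\<close>
lemma gadget_score_full:
  "gscore ad \<rho> (gadget m a b) {0..<2*m+2} v
     = gadget_wt m a b v / (1 + real (card {u\<in>{0..<2*m+2}. gadget_adj m v u})) powr \<rho>"
  by (simp add: gscore_def gdeg_def gadget_def)

lemma gadget_score_0:
  "gscore ad \<rho> (gadget m a b) {0..<2*m+2} 0 = (1/m) * ((2*m+1)/(m+3)) powr a / (2*m+1) powr \<rho>"
proof -
  have deg: "{u\<in>{0..<2*m+2}. gadget_adj m 0 u} = {2..<2*m+2}" by (auto simp: gadget_simps)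
  show ?thesis unfolding gadget_score_full deg by (simp add: gadget_wt_def add.commute)
qed

lemma gadget_score_1:
  "gscore ad \<rho> (gadget m a b) {0..<2*m+2} 1 = (1/m) * ((m+1)/(m+3)) powr b / (m+1) powr \<rho>"
proof -
  have deg: "{u\<in>{0..<2*m+2}. gadget_adj m 1 u} = {2..<m+2}" by (auto simp: gadget_simps)
  show ?thesis unfolding gadget_score_full deg by (simp add: gadget_wt_def add.commute)
qed

lemma gadget_score_good:
  assumes "gadget_good m v"
  shows "gscore ad \<rho> (gadget m a b) {0..<2*m+2} v = (1/m) / (m+3) powr \<rho>"
proof -
  have "{u\<in>{0..<2*m+2}. gadget_adj m v u} = {0,1} \<union> {m+2..<2*m+2}"
    using assms by (auto simp: gadget_simps)
  then have deg: "card {u\<in>{0..<2*m+2}. gadget_adj m v u} = m + 2" by (simp add: card_Un_disjoint)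
  show ?thesis unfolding gadget_score_full deg
    using assms by (simp add: gadget_wt_def gadget_good_def add.commute)
qed

lemma gadget_score_null: "gadget_null m v \<Longrightarrow> gscore ad \<rho> (gadget m a b) {0..<2*m+2} v = 0"
  unfolding gadget_score_full by (simp add: gadget_wt_def gadget_null_def gadget_good_def)

lemma gadget_score_nonneg: "gscore ad \<rho> (gadget m a b) R v \<ge> 0"
  by (simp add: gscore_def gadget_def gadget_wt_nonneg)

lemma good_score_gt_score_0_iff:
  fixes a \<rho> :: real
  assumes "m \<ge> 3"
  shows "(1/m) / (real m+3) powr \<rho> > (1/m) * ((2*real m+1)/(real m+3)) powr a / (2*real m+1) powr \<rho>
    \<longleftrightarrow> a < \<rho>"
proof -
  have "(1/m) / (real m+3) powr \<rho> > (1/m) * ((2*real m+1)/(real m+3)) powr a / (2*real m+1) powr \<rho>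
     \<longleftrightarrow> ((2*real m+1)/(real m+3)) powr a < ((2*real m+1)/(real m+3)) powr \<rho>"
    using assms by (simp add: powr_divide field_simps)
  also have "\<dots> \<longleftrightarrow> a < \<rho>" using assms by (intro powr_less_cancel_iff) (auto simp: field_simps)
  finally show ?thesis .
qed

lemma good_score_gt_score_1_iff:
  fixes b \<rho> :: real
  assumes "m \<ge> 3"
  shows "(1/m) / (real m+3) powr \<rho> > (1/m) * ((real m+1)/(real m+3)) powr b / (real m+1) powr \<rho>
    \<longleftrightarrow> \<rho> < b"
proof -
  have "(1/m) / (real m+3) powr \<rho> > (1/m) * ((real m+1)/(real m+3)) powr b / (real m+1) powr \<rho>
     \<longleftrightarrow> ((real m+3)/(real m+1)) powr \<rho> < ((real m+3)/(real m+1)) powr b"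
    using assms by (simp add: powr_divide field_simps)
  also have "\<dots> \<longleftrightarrow> \<rho> < b" using assms by (intro powr_less_cancel_iff) (auto simp: field_simps)
  finally show ?thesis .
qed

lemma gadget_good_score_gt_hubs_iff:
  assumes "m \<ge> 3"
  shows "gscore ad \<rho> (gadget m a b) {0..<2*m+2} 0 < gscore ad \<rho> (gadget m a b) {0..<2*m+2} 2 \<and>
         gscore ad \<rho> (gadget m a b) {0..<2*m+2} 1 < gscore ad \<rho> (gadget m a b) {0..<2*m+2} 2
     \<longleftrightarrow> a < \<rho> \<and> \<rho> < b"
proof -
  have "gadget_good m 2" using assms by (simp add: gadget_good_def)
  then show ?thesis
    unfolding gadget_score_0 gadget_score_1 gadget_score_good[OF \<open>gadget_good m 2\<close>]
    using good_score_gt_score_0_iff[OF assms] good_score_gt_score_1_iff[OF assms] by simp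
qed

lemma gadget_pick_good:
  assumes m: "m \<ge> 3" and "a < \<rho>" "\<rho> < b"
  shows "gadget_good m (gpick ad \<rho> (gadget m a b) {0..<2*m+2})"
proof -
  let ?s = "gscore ad \<rho> (gadget m a b) {0..<2*m+2}"
  let ?v = "gpick ad \<rho> (gadget m a b) {0..<2*m+2}"
  have "?v \<in> {0..<2*m+2}" "\<forall>u\<in>{0..<2*m+2}. ?s u \<le> ?s ?v"
    using gpick_maximal[of "{0..<2*m+2}"] by auto
  then have v: "?v < 2*m+2" "?s 2 \<le> ?s ?v" using m by auto
  have "?s 0 < ?s 2" "?s 1 < ?s 2"
    using gadget_good_score_gt_hubs_iff[OF m] assms by auto
  moreover have "?s 2 > 0"
    using gadget_score_good[of m 2] m by (simp add: gadget_good_def)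
  ultimately show ?thesis
    using gadget_vertex_cases[OF v(1)] v(2) gadget_score_null[of m ?v ad \<rho> a b] by auto
qed

lemma gadget_pick_hub:
  assumes m: "m \<ge> 3" and out: "\<not> (a < \<rho> \<and> \<rho> < b)"
  shows "gpick ad \<rho> (gadget m a b) {0..<2*m+2} \<le> 1"
proof -
  let ?s = "gscore ad \<rho> (gadget m a b) {0..<2*m+2}"
  have hub: "?s 2 \<le> ?s 0 \<or> ?s 2 \<le> ?s 1"
    using gadget_good_score_gt_hubs_iff[OF m, of ad \<rho> a b] out by linarith
  obtain w :: nat where w: "w \<le> 1" "?s 2 \<le> ?s w" "?s 0 \<le> ?s w" "?s 1 \<le> ?s w"
  proof (cases "?s 1 \<le> ?s 0")
    case True
    then show ?thesis using that[of 0] hub by auto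
  next
    case False
    then show ?thesis using that[of 1] hub by auto
  qed
  have "?s u \<le> ?s w" if "u \<in> {0..<2*m+2}" for u
  proof -
    have "u = 0 \<or> u = 1 \<or> gadget_good m u \<or> gadget_null m u"
      using that gadget_vertex_cases by simp
    moreover have "?s u = ?s 2" if "gadget_good m u"
      using gadget_score_good[OF that] gadget_score_good[of m 2] m by (simp add: gadget_good_def)
    moreover have "?s u \<le> ?s w" if "gadget_null m u"
      using gadget_score_null[OF that] gadget_score_nonneg[of ad \<rho> m a b _ w] by simp
    ultimately show ?thesis using w by auto
  qed
  then have "gpick ad \<rho> (gadget m a b) {0..<2*m+2} \<le> w"
    using w(1) by (intro gpick_le) auto
  then show ?thesis using w(1) by linarith
qed

lemma greedy_gadget:
  "greedy ad \<rho> (gadget m a b) = insert (gpick ad \<rho> (gadget m a b) {0..<2*m+2})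
     (greedy_run ad \<rho> (gadget m a b) (2*m+1)
        ({0..<2*m+2} - {gpick ad \<rho> (gadget m a b) {0..<2*m+2}}
           - {u. gadget_adj m (gpick ad \<rho> (gadget m a b) {0..<2*m+2}) u}))"
  using greedy_first_step[of "gadget m a b" "2*m+1" ad \<rho>] by (simp add: gadget_def)

lemma gadget_cost_inside:
  assumes m: "m \<ge> 3" and "a < \<rho>" "\<rho> < b"
  shows "cost ad \<rho> (gadget m a b) = 1"
proof -
  let ?x = "gadget m a b"
  let ?v = "gpick ad \<rho> ?x {0..<2*m+2}"
  have good: "gadget_good m ?v" using gadget_pick_good[OF assms] .
  have rest: "{0..<2*m+2} - {?v} - {u. gadget_adj m ?v u} = {2..<m+2} - {?v}"
    using good by (auto simp: gadget_simps)
  have "greedy_run ad \<rho> ?x (2*m+1) ({2..<m+2} - {?v}) = {2..<m+2} - {?v}"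
  proof (rule greedy_run_of_independent)
    have "card ({2..<m+2} - {?v}) \<le> card {2..<m+2}" by (rule card_mono) auto
    then show "card ({2..<m+2} - {?v}) \<le> 2*m+1" by simp
  qed (auto simp: gadget_def gadget_simps)
  then have "greedy ad \<rho> ?x = insert ?v ({2..<m+2} - {?v})"
    unfolding greedy_gadget rest by simp
  also have "\<dots> = {2..<m+2}" using good by (auto simp: gadget_good_def)
  finally show ?thesis using sum_gadget_wt_good[of m a b] m by (simp add: cost_def gadget_def)
qed

lemma gadget_cost_outside:
  assumes m: "m \<ge> 3" and out: "\<not> (a < \<rho> \<and> \<rho> < b)" and "a \<le> 1" "0 \<le> b"
  shows "cost ad \<rho> (gadget m a b) \<le> 3/m"
proof -
  let ?x = "gadget m a b"
  let ?v = "gpick ad \<rho> ?x {0..<2*m+2}"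
  let ?R' = "{0..<2*m+2} - {?v} - {u. gadget_adj m ?v u}"
  have "?v \<le> 1" by (rule gadget_pick_hub[OF m out])
  then have "?v \<in> {0,1} \<union> {m+2..<2*m+2}" "?R' \<subseteq> {0,1} \<union> {m+2..<2*m+2}"
    by (auto simp: gadget_simps)
  moreover have "greedy_run ad \<rho> ?x (2*m+1) ?R' \<subseteq> ?R'"
    by (intro greedy_run_subset) simp
  ultimately have "greedy ad \<rho> ?x \<subseteq> {0,1} \<union> {m+2..<2*m+2}"
    unfolding greedy_gadget by (intro insert_subsetI) (blast, rule subset_trans)
  then have "cost ad \<rho> ?x \<le> sum (gadget_wt m a b) ({0,1} \<union> {m+2..<2*m+2})"
    unfolding cost_def wt_gadget by (rule sum_mono2[rotated]) (auto simp: gadget_wt_nonneg)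
  then show ?thesis
    using sum_gadget_wt_not_good[of m a b] gadget_wt_hubs_le[OF m assms(3,4)] m by simp
qed

lemma gadget_cost_le:
  assumes "m \<ge> 3" "a \<le> 1" "0 \<le> b"
  shows "cost ad \<rho> (gadget m a b) \<le> 3/m + indicator {a<..<b} \<rho>"
  using gadget_cost_inside[of m a \<rho> b ad] gadget_cost_outside[of m a \<rho> b ad] assms
  by (cases "a < \<rho> \<and> \<rho> < b") (auto simp: indicator_def)

lemma integral_le_plus_measure:
  fixes f :: "real \<Rightarrow> real"
  assumes "prob_space M" "sets M = sets borel" "I \<in> sets borel"
    and f_le: "\<And>x. f x \<le> c + indicator I x" and "c \<ge> 0"
  shows "(\<integral>x. f x \<partial>M) \<le> c + measure M I"
proof (cases "integrable M f")
  case True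
  interpret prob_space M by fact
  have I: "I \<in> sets M" using assms by simp
  have "(\<integral>x. f x \<partial>M) \<le> (\<integral>x. c + indicator I x \<partial>M)"
    using True I f_le by (intro integral_mono) (auto simp: emeasure_eq_measure)
  also have "\<dots> = c + measure M I"
    using I by (subst Bochner_Integration.integral_add) (auto simp: emeasure_eq_measure prob_space)
  finally show ?thesis .
qed (use assms in \<open>simp add: not_integrable_integral_eq\<close>)

text \<open>l and L are the left end and the length of the current interval.\<close>
fun nested_dist :: "nat \<Rightarrow> nat \<Rightarrow> real \<Rightarrow> real \<Rightarrow> mwis list pmf" where
  "nested_dist m 0 l L = return_pmf []"
| "nested_dist m (Suc T) l L = pmf_of_set {..<m} \<bind>
     (\<lambda>j. map_pmf (\<lambda>xs. gadget m (l + real j*L/m) (l + real j*L/m + L/m) # xs)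
            (nested_dist m T (l + real j*L/m) (L/m)))"

lemma finite_set_nested_dist: "m > 0 \<Longrightarrow> finite (set_pmf (nested_dist m T l L))"
  by (induction T arbitrary: l L) (auto simp: set_bind_pmf lessThan_empty_iff)

lemma piece_bounds:
  fixes L :: real and j m :: nat
  assumes "0 < L" "j < m"
  shows "0 \<le> j*L/m" "0 < L/m" "j*L/m + L/m \<le> L"
proof -
  show "0 \<le> j*L/m" "0 < L/m" using assms by auto
  have "(real j + 1) * (L/m) \<le> real m * (L/m)" using assms by (intro mult_right_mono) auto
  then show "j*L/m + L/m \<le> L" using assms by (simp add: field_simps)
qed

lemma pieces_disjoint:
  fixes L :: real and m :: nat
  assumes "L > 0"
  shows "disjoint_family_on (\<lambda>j. {l + j*L/m <..< l + j*L/m + L/m}) {..<m}"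
proof -
  have "l + i*L/m + L/m \<le> l + j*L/m" if "i < j" for i j :: nat
  proof -
    have "(real i + 1) * (L/m) \<le> real j * (L/m)" using that assms by (intro mult_right_mono) auto
    moreover have "real i * L / m + L / m = (real i + 1) * (L/m)" by (simp add: add_divide_distrib algebra_simps)
    ultimately show ?thesis by simp
  qed
  then show ?thesis unfolding disjoint_family_on_def
    by (auto simp: not_less_iff_gr_or_eq) (smt (verit, best) linorder_neqE_nat)
qed

text \<open>Each gadget contributes at most 3/m plus the mass of its piece, and the pieces are disjoint.\<close>
lemma sum_integral_gadget_cost_le:
  fixes l L :: real and m :: nat
  assumes m: "m \<ge> 3" and "0 \<le> l" "0 < L" "l + L \<le> 1"
    and M: "prob_space M" "sets M = sets borel"
  shows "(\<Sum>j<m. \<integral>\<rho>. cost ad \<rho> (gadget m (l + j*L/m) (l + j*L/m + L/m)) \<partial>M) \<le> 4"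
proof -
  interpret prob_space M by (rule M(1))
  define P where "P j = {l + j*L/m <..< l + j*L/m + L/m}" for j :: nat
  have "(\<Sum>j<m. \<integral>\<rho>. cost ad \<rho> (gadget m (l + j*L/m) (l + j*L/m + L/m)) \<partial>M)
      \<le> (\<Sum>j<m. 3/m + measure M (P j))"
  proof (rule sum_mono)
    fix j assume "j \<in> {..<m}"
    then have "j < m" by simp
    from piece_bounds[OF \<open>0 < L\<close> this]
    have "l + j*L/m \<le> 1" "0 \<le> l + j*L/m + L/m" using assms by linarith+
    then show "(\<integral>\<rho>. cost ad \<rho> (gadget m (l + j*L/m) (l + j*L/m + L/m)) \<partial>M) \<le> 3/m + measure M (P j)"
      using m M unfolding P_def
      by (intro integral_le_plus_measure gadget_cost_le) auto
  qed
  also have "\<dots> = 3 + measure M (\<Union>j<m. P j)"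
    using m M pieces_disjoint[OF \<open>0 < L\<close>, of l m]
    by (simp add: sum.distrib finite_measure_finite_Union P_def subset_eq)
  also have "\<dots> \<le> 4" using prob_le_1 by simp
  finally show ?thesis .
qed

lemma set_nested_dist:
  fixes l L :: real and m :: nat
  assumes m: "m \<ge> 3" and "0 \<le> l" "0 < L" "l + L \<le> 1" "xs \<in> set_pmf (nested_dist m T l L)"
  shows "length xs = T \<and> (\<forall>x\<in>set xs. valid_mwis x \<and> nv x = 2*m+2) \<and>
         (\<exists>\<rho>. l < \<rho> \<and> \<rho> < l + L \<and> (\<forall>t<T. cost ad \<rho> (xs!t) = 1))"
  using assms(2-)
proof (induction T arbitrary: l L xs)
  case 0
  then show ?case by (intro conjI exI[of _ "l + L/2"]) auto
next
  case (Suc T)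
  obtain j rest where j: "j < m" and rest: "rest \<in> set_pmf (nested_dist m T (l + j*L/m) (L/m))"
    and xs: "xs = gadget m (l + j*L/m) (l + j*L/m + L/m) # rest"
    using Suc.prems(4) m by (auto simp: set_bind_pmf lessThan_empty_iff)
  define l' where "l' = l + j*L/m"
  define L' where "L' = L/m"
  have pb: "l \<le> l'" "0 < L'" "l' + L' \<le> l + L"
    using piece_bounds[OF Suc.prems(2) j] by (simp_all add: l'_def L'_def)
  then obtain \<rho> where \<rho>: "l' < \<rho>" "\<rho> < l' + L'" "\<forall>t<T. cost ad \<rho> (rest!t) = 1"
    and IH: "length rest = T" "\<forall>x\<in>set rest. valid_mwis x \<and> nv x = 2*m+2"
    using Suc.IH[of l' L' rest] Suc.prems rest by (auto simp: l'_def L'_def)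
  have "valid_mwis (gadget m l' (l' + L'))" using m pb Suc.prems by (intro gadget_valid) auto
  moreover have "cost ad \<rho> (gadget m l' (l' + L')) = 1" using m \<rho> by (intro gadget_cost_inside)
  then have "\<forall>t<Suc T. cost ad \<rho> (xs!t) = 1" using \<rho>(3) xs by (auto simp: l'_def L'_def nth_Cons')
  moreover have "l < \<rho>" "\<rho> < l + L" using pb \<rho> by linarith+
  ultimately show ?case using IH xs by (auto simp: l'_def L'_def gadget_def)
qed

definition learner_gain :: "bool \<Rightarrow> nat \<Rightarrow> (mwis list \<Rightarrow> real measure) \<Rightarrow> mwis list \<Rightarrow> real" where
  "learner_gain ad T L xs = (\<Sum>t<T. \<integral>\<rho>. cost ad \<rho> (xs ! t) \<partial>(L (take t xs)))"

lemma learner_gain_Cons: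
  "learner_gain ad (Suc T) L (x # xs) = (\<integral>\<rho>. cost ad \<rho> x \<partial>(L [])) + learner_gain ad T (\<lambda>ys. L (x # ys)) xs"
  unfolding learner_gain_def by (subst sum.lessThan_Suc_shift) simp

lemma expectation_learner_gain_nested_dist:
  fixes l L :: real and m :: nat
  assumes m: "m \<ge> 3" and "0 \<le> l" "0 < L" "l + L \<le> 1" "valid_learner Lrn"
  shows "measure_pmf.expectation (nested_dist m T l L) (learner_gain ad T Lrn) \<le> T * (4/m)"
  using assms(2-)
proof (induction T arbitrary: l L Lrn)
  case 0
  then show ?case by (simp add: learner_gain_def)
next
  case (Suc T)
  define g where "g j = gadget m (l + j*L/m) (l + j*L/m + L/m)" for j :: nat
  define c where "c j = (\<integral>\<rho>. cost ad \<rho> (g j) \<partial>(Lrn []))" for j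
  define D where "D j = nested_dist m T (l + j*L/m) (L/m)" for j
  have round: "measure_pmf.expectation (map_pmf ((#) (g j)) (D j)) (learner_gain ad (Suc T) Lrn)
      \<le> c j + T * (4/m)" if j: "j < m" for j
  proof -
    have fin: "finite (set_pmf (D j))" unfolding D_def using m by (simp add: finite_set_nested_dist)
    have "measure_pmf.expectation (map_pmf ((#) (g j)) (D j)) (learner_gain ad (Suc T) Lrn)
        = c j + measure_pmf.expectation (D j) (learner_gain ad T (\<lambda>ys. Lrn (g j # ys)))"
      using fin by (simp add: learner_gain_Cons c_def integrable_measure_pmf_finite)
    also have "measure_pmf.expectation (D j) (learner_gain ad T (\<lambda>ys. Lrn (g j # ys))) \<le> T * (4/m)"
      unfolding D_def using piece_bounds[OF Suc.prems(2) j] Suc.prems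
      by (intro Suc.IH) (auto simp: valid_learner_def)
    finally show ?thesis by simp
  qed
  have "(\<Sum>j<m. c j) \<le> 4" unfolding c_def g_def
    using m Suc.prems by (intro sum_integral_gadget_cost_le) (auto simp: valid_learner_def)
  have "measure_pmf.expectation (nested_dist m (Suc T) l L) (learner_gain ad (Suc T) Lrn)
      = (\<Sum>j<m. measure_pmf.expectation (map_pmf ((#) (g j)) (D j)) (learner_gain ad (Suc T) Lrn) / m)"
    unfolding nested_dist.simps g_def D_def using m finite_set_nested_dist[of m]
    by (subst pmf_expectation_bind_pmf_of_set) (auto simp: divide_inverse_commute lessThan_empty_iff)
  also have "\<dots> \<le> (\<Sum>j<m. (c j + T * (4/m)) / m)"
    using round by (intro sum_mono divide_right_mono) auto
  also have "\<dots> = (\<Sum>j<m. c j) / m + T * (4/m)"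
    using m by (simp add: sum_divide_distrib[symmetric] sum.distrib add_divide_distrib)
  also have "\<dots> \<le> Suc T * (4/m)"
    using \<open>(\<Sum>j<m. c j) \<le> 4\<close> m by (simp add: divide_right_mono algebra_simps add_divide_distrib)
  finally show ?case .
qed

lemma regret_ge_if_perfect_parameter:
  assumes "T \<ge> 1" "length xs = T" "\<forall>x\<in>set xs. valid_mwis x"
    and "0 \<le> \<rho>" "\<rho> \<le> 1" "\<forall>t<T. cost ad \<rho> (xs!t) = 1"
  shows "regret ad T L xs \<ge> 1 - learner_gain ad T L xs / T"
proof -
  have le_T: "(\<Sum>t<T. cost ad r (xs ! t)) \<le> T" for r
  proof -
    have "(\<Sum>t<T. cost ad r (xs ! t)) \<le> (\<Sum>t<T. 1)"
    proof (rule sum_mono)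
      fix t assume "t \<in> {..<T}"
      then have "xs ! t \<in> set xs" using assms(2) by simp
      then show "cost ad r (xs ! t) \<le> 1" using assms(3) cost_le_1 by blast
    qed
    then show ?thesis by simp
  qed
  have "bdd_above ((\<lambda>r. \<Sum>t<T. cost ad r (xs ! t)) ` {0..1})"
    by (rule bdd_aboveI2) (rule le_T)
  then have "T \<le> (SUP r\<in>{0..1}. \<Sum>t<T. cost ad r (xs ! t))"
    using assms(4-) by (intro cSUP_upper2[where x = \<rho>]) auto
  then show ?thesis
    using assms(1) by (simp add: regret_def learner_gain_def field_simps)
qed

lemma expected_regret_nested_dist:
  assumes m: "m \<ge> 3" and T: "T \<ge> 1" and L: "valid_learner L"
  shows "expected_regret ad T (nested_dist m T 0 1) L \<ge> 1 - 4/m"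
proof -
  let ?D = "nested_dist m T 0 1"
  have fin: "finite (set_pmf ?D)" using m by (simp add: finite_set_nested_dist)
  have "regret ad T L xs \<ge> 1 - learner_gain ad T L xs / T" if xs: "xs \<in> set_pmf ?D" for xs
  proof -
    obtain \<rho> where "0 < \<rho>" "\<rho> < 1" "\<forall>t<T. cost ad \<rho> (xs!t) = 1"
      and "length xs = T" "\<forall>x\<in>set xs. valid_mwis x"
      using set_nested_dist[OF m _ _ _ xs, of ad] by auto
    then show ?thesis using T by (intro regret_ge_if_perfect_parameter) auto
  qed
  then have "measure_pmf.expectation ?D (\<lambda>xs. 1 - learner_gain ad T L xs / T) \<le> expected_regret ad T ?D L"
    unfolding expected_regret_def using fin
    by (intro integral_mono_AE) (auto intro: integrable_measure_pmf_finite simp: AE_measure_pmf_iff)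
  moreover have "measure_pmf.expectation ?D (\<lambda>xs. 1 - learner_gain ad T L xs / T)
      = 1 - measure_pmf.expectation ?D (learner_gain ad T L) / T"
    using fin by (simp add: integrable_measure_pmf_finite)
  moreover have "measure_pmf.expectation ?D (learner_gain ad T L) / T \<le> 4/m"
    using expectation_learner_gain_nested_dist[OF m _ _ _ L, of 0 1 T ad] T
    by (simp add: divide_le_eq mult.commute)
  ultimately show ?thesis by linarith
qed

definition empty_mwis :: mwis where
  "empty_mwis = \<lparr>nv = 0, adj = (\<lambda>_ _. False), wt = (\<lambda>_. 0)\<rparr>"

lemma valid_empty_mwis: "valid_mwis empty_mwis"
  by (auto simp: valid_mwis_def empty_mwis_def indep_set_def)

lemma expected_regret_empty: "expected_regret ad T (return_pmf (replicate T empty_mwis)) L = 0"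
  by (simp add: expected_regret_def regret_def cost_def greedy_def empty_mwis_def)

text \<open>Below 8 vertices there is no room for a gadget with m \<ge> 3; the bound is then trivial.\<close>
definition regret_slack :: "nat \<Rightarrow> real" where
  "regret_slack n = (if n < 8 then 1 else 4 / real ((n - 2) div 2))"

lemma regret_slack_tendsto_0: "regret_slack \<longlonglongrightarrow> 0"
proof (rule tendsto_sandwich[of "\<lambda>_. 0" _ _ "\<lambda>n. 16 / real n"])
  show "\<forall>\<^sub>F n in sequentially. regret_slack n \<le> 16 / real n"
  proof (rule eventually_sequentiallyI[of 8])
    fix n :: nat assume "8 \<le> n"
    then have "real n \<le> 4 * ((n - 2) div 2)" "real ((n - 2) div 2) > 0" by linarith+
    then show "regret_slack n \<le> 16 / real n" using \<open>8 \<le> n\<close> by (simp add: regret_slack_def field_simps)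
  qed
qed (auto simp: regret_slack_def lim_const_over_n)

theorem mainTheorem12:
  fixes ad :: bool
  shows "\<exists>\<epsilon> :: nat \<Rightarrow> real. \<epsilon> \<longlonglongrightarrow> 0 \<and>
    (\<forall>n T. T \<ge> 1 \<longrightarrow>
      (\<exists>D :: mwis list pmf.
         (\<forall>xs\<in>set_pmf D. length xs = T \<and> (\<forall>x\<in>set xs. valid_mwis x \<and> nv x \<le> n)) \<and>
         (\<forall>L. valid_learner L \<longrightarrow> expected_regret ad T D L \<ge> 1 - \<epsilon> n)))"
proof (intro exI[of _ regret_slack] conjI allI impI regret_slack_tendsto_0)
  fix n T :: nat assume T: "T \<ge> 1"
  show "\<exists>D. (\<forall>xs\<in>set_pmf D. length xs = T \<and> (\<forall>x\<in>set xs. valid_mwis x \<and> nv x \<le> n)) \<and>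
         (\<forall>L. valid_learner L \<longrightarrow> expected_regret ad T D L \<ge> 1 - regret_slack n)"
  proof (cases "n < 8")
    case True
    then show ?thesis using valid_empty_mwis expected_regret_empty
      by (intro exI[of _ "return_pmf (replicate T empty_mwis)"]) (auto simp: regret_slack_def empty_mwis_def)
  next
    case False
    define m where "m = (n - 2) div 2"
    have m: "m \<ge> 3" "2*m+2 \<le> n" using False by (auto simp: m_def)
    have "regret_slack n = 4/m" by (simp only: regret_slack_def m_def if_not_P[OF False])
    show ?thesis
      using set_nested_dist[OF m(1), of 0 1 _ T ad] expected_regret_nested_dist[OF m(1) T, of _ ad]
        m \<open>regret_slack n = 4/m\<close> by (intro exI[of _ "nested_dist m T 0 1"]) auto
  qed
qed

end
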